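(* Let $Y,\widetilde Y\in\mathbb{R}^{m\times N}$ with nonzero columns $\widetilde Y_t$, $w\in\mathbb{R}^N$, $r\in\mathbb Z^+$. Run the $r$-th order data alignment: $\hat u_0=0$; for $t=1,\dots,N$, $\widetilde w_t=\langle\widetilde Y_t,\hat u_{t-1}+w_tY_t\rangle/\|\widetilde Y_t\|_2^2$ and $\hat u_t=\hat u_{t-1}+w_tY_t-\widetilde w_t\widetilde Y_t$; for $t=N+1,\dots,rN$ (with subscripts of $w,\widetilde w,Y,\widetilde Y$ taken modulo $N$, in $\{1,\dots,N\}$, and $\widetilde w_t$ on the right of the first line being its current value), $\hat v_{t-1}=\hat u_{t-1}-w_tY_t+\widetilde w_t\widetilde Y_t$, then $\widetilde w_t\leftarrow\langle\widetilde Y_t,\hat v_{t-1}+w_tY_t\rangle/\|\widetilde Y_t\|_2^2$, and $\hat u_t=\hat v_{t-1}+w_tY_t-\widetilde w_t\widetilde Y_t$. Then $$\hat u_N=\sum_{j=1}^N w_j\,P_{\widetilde Y_N^\perp}\cdots P_{\widetilde Y_{j+1}^\perp}P_{\widetilde Y_j^\perp}(Y_j)\quad\text{and}\quad \hat u_{rN}=P^{r-1}\hat u_N,$$ where $P:=P_{\widetilde Y_N^\perp}\cdots P_{\widetilde Y_2^\perp}P_{\widetilde Y_1^\perp}$. Moreover $\hat u_{rN}=Yw-\widetilde Y\widetilde w$ for the final vector $\widetilde w$.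
   Context: For nonzero $z\in\mathbb R^m$, $P_{z^\perp}=I-zz^\top/\|z\|_2^2$ is the orthogonal projection onto $\mathrm{span}(z)^\perp$. Columns of a matrix $A$ are denoted $A_j$. *)

theory Defs
  imports "HOL-Analysis.Analysis"
begin

text \<open>Columns of Y, Yt (= \<open>\<widetilde>Y\<close>) are indexed by 1..N and given as functions
  nat \<Rightarrow> real^'m; vectors w, \<open>\<widetilde>w\<close> are functions nat \<Rightarrow> real on 1..N.\<close>

definition perp_proj :: "real^'m \<Rightarrow> real^'m \<Rightarrow> real^'m" where
  "perp_proj z x = x - ((z \<bullet> x) / (norm z)\<^sup>2) *\<^sub>R z"

definition cidx :: "nat \<Rightarrow> nat \<Rightarrow> nat" where
  "cidx N t = ((t - 1) mod N) + 1"

text \<open>Apply P_{z_j}^perp first, then P_{z_{j+1}}^perp, ..., finally P_{z_k}^perp.\<close>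
definition proj_chain :: "(nat \<Rightarrow> real^'m) \<Rightarrow> nat \<Rightarrow> nat \<Rightarrow> real^'m \<Rightarrow> real^'m" where
  "proj_chain Z j k x = foldl (\<lambda>v i. perp_proj (Z i) v) x [j..<Suc k]"

text \<open>State after t steps of the r-th order data alignment: (\<open>\<hat>u_t\<close>, current \<open>\<widetilde>w\<close>).\<close>
primrec align :: "(nat \<Rightarrow> real^'m) \<Rightarrow> (nat \<Rightarrow> real^'m) \<Rightarrow> (nat \<Rightarrow> real) \<Rightarrow> nat
    \<Rightarrow> nat \<Rightarrow> (real^'m) \<times> (nat \<Rightarrow> real)" where
  "align Y Yt w N 0 = (0, (\<lambda>_. 0))"
| "align Y Yt w N (Suc t) =
     (let (u, wt) = align Y Yt w N t; j = cidx N (Suc t) in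
      if Suc t \<le> N then
        (let a = (Yt j \<bullet> (u + w j *\<^sub>R Y j)) / (norm (Yt j))\<^sup>2
         in (u + w j *\<^sub>R Y j - a *\<^sub>R Yt j, wt(j := a)))
      else
        (let v = u - w j *\<^sub>R Y j + wt j *\<^sub>R Yt j;
             a = (Yt j \<bullet> (v + w j *\<^sub>R Y j)) / (norm (Yt j))\<^sup>2
         in (v + w j *\<^sub>R Y j - a *\<^sub>R Yt j, wt(j := a))))"

end

theory Submission
  imports Defs
begin

text \<open>During the first sweep each step adds \<open>w\<^sub>t Y\<^sub>t\<close> and projects onto
  \<open>\<widetilde>Y\<^sub>t\<^sup>\<perp>\<close>, so linearity of the projections gives the formula for \<open>\<hat>u\<^sub>N\<close>.
  In every later step the correction \<open>\<widetilde>w\<^sub>t \<widetilde>Y\<^sub>t\<close> of the previous sweep is restored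
  before projecting again; since the projection onto \<open>\<widetilde>Y\<^sub>t\<^sup>\<perp>\<close> annihilates \<open>\<widetilde>Y\<^sub>t\<close>, the
  step is just the projection of \<open>\<hat>u\<^sub>t\<^sub>-\<^sub>1\<close>, and each further sweep applies \<open>P\<close>.
  Finally \<open>\<hat>u\<^sub>t = (\<Sum>j \<le> min t N. w\<^sub>j Y\<^sub>j) - (\<Sum>j. \<widetilde>w\<^sub>j \<widetilde>Y\<^sub>j)\<close> is preserved by every
  step, because whatever is subtracted from \<open>\<hat>u\<close> is added to the coefficient \<open>\<widetilde>w\<^sub>t\<close>.\<close>

lemma linear_perp_proj: "linear (perp_proj z)"
  unfolding perp_proj_def
  by (rule linearI) (auto simp: inner_add_right algebra_simps add_divide_distrib)

lemma perp_proj_add_scaleR_self: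
  assumes "z \<noteq> 0"
  shows "perp_proj z (x + c *\<^sub>R z) = perp_proj z x"
proof -
  have "(z \<bullet> (x + c *\<^sub>R z)) / (norm z)\<^sup>2 = (z \<bullet> x) / (norm z)\<^sup>2 + c"
    using assms by (simp add: inner_add_right dot_square_norm field_simps)
  then show ?thesis
    unfolding perp_proj_def by (simp add: algebra_simps)
qed

lemma proj_chain_Suc:
  "j \<le> Suc k \<Longrightarrow> proj_chain Z j (Suc k) x = perp_proj (Z (Suc k)) (proj_chain Z j k x)"
  unfolding proj_chain_def by simp

lemma proj_chain_empty: "proj_chain Z (Suc k) k x = x"
  unfolding proj_chain_def by simp

lemma cidx_in_range: "1 \<le> N \<Longrightarrow> cidx N t \<in> {1..N}"
  unfolding cidx_def by (simp add: Suc_leI)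

lemma cidx_mult_add:
  assumes "1 \<le> i" "i \<le> N"
  shows "cidx N (k * N + i) = i"
proof -
  have "k * N + i - 1 = i - 1 + k * N"
    using assms(1) by simp
  then have "(k * N + i - 1) mod N = (i - 1) mod N"
    by (simp only: mod_mult_self1)
  also have "\<dots> = i - 1"
    using assms by simp
  finally show ?thesis
    unfolding cidx_def using assms(1) by simp
qed

lemma sum_fun_upd_scaleR:
  fixes Z :: "'a \<Rightarrow> 'b::real_vector"
  assumes "finite A" "j \<in> A"
  shows "(\<Sum>i\<in>A. (f(j := a)) i *\<^sub>R Z i) = (\<Sum>i\<in>A. f i *\<^sub>R Z i) + (a - f j) *\<^sub>R Z j"
proof -
  have upd: "(\<Sum>i\<in>A. (f(j := a)) i *\<^sub>R Z i) = a *\<^sub>R Z j + (\<Sum>i\<in>A - {j}. f i *\<^sub>R Z i)"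
    using assms by (simp add: sum.remove)
  have old: "(\<Sum>i\<in>A. f i *\<^sub>R Z i) = f j *\<^sub>R Z j + (\<Sum>i\<in>A - {j}. f i *\<^sub>R Z i)"
    using assms by (simp add: sum.remove)
  show ?thesis
    unfolding upd old by (simp add: algebra_simps)
qed

lemma align_Suc_first_sweep:
  fixes Y Yt :: "nat \<Rightarrow> real^'m" and w :: "nat \<Rightarrow> real"
  assumes "Suc t \<le> N"
  defines "v \<equiv> fst (align Y Yt w N t) + w (Suc t) *\<^sub>R Y (Suc t)"
  shows "align Y Yt w N (Suc t) = (perp_proj (Yt (Suc t)) v,
           (snd (align Y Yt w N t))(Suc t := (Yt (Suc t) \<bullet> v) / (norm (Yt (Suc t)))\<^sup>2))"
proof -
  have "cidx N (Suc t) = Suc t"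
    using assms(1) unfolding cidx_def by simp
  then show ?thesis
    using assms by (simp add: Let_def perp_proj_def split: prod.split)
qed

lemma align_Suc_later_sweep:
  fixes Y Yt :: "nat \<Rightarrow> real^'m" and w :: "nat \<Rightarrow> real"
  assumes "N < Suc t" and "j = cidx N (Suc t)"
    and "u = fst (align Y Yt w N t)" and "b = snd (align Y Yt w N t) j"
    and "a = (Yt j \<bullet> (u + b *\<^sub>R Yt j)) / (norm (Yt j))\<^sup>2"
  shows "align Y Yt w N (Suc t) = (u + (b - a) *\<^sub>R Yt j, (snd (align Y Yt w N t))(j := a))"
  using assms by (simp add: Let_def algebra_simps split: prod.split)

declare align.simps(2) [simp del]

lemma fst_align_Suc_later_sweep:
  assumes "N < Suc t" "Yt (cidx N (Suc t)) \<noteq> 0"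
  shows "fst (align Y Yt w N (Suc t)) = perp_proj (Yt (cidx N (Suc t))) (fst (align Y Yt w N t))"
  using align_Suc_later_sweep[OF assms(1) refl refl refl refl, of Y Yt w]
    perp_proj_add_scaleR_self[OF assms(2), of "fst (align Y Yt w N t)"]
  by (simp add: perp_proj_def algebra_simps)

lemma fst_align_first_sweep:
  "t \<le> N \<Longrightarrow> fst (align Y Yt w N t) = (\<Sum>j=1..t. w j *\<^sub>R proj_chain Yt j t (Y j))"
proof (induction t)
  case 0
  then show ?case by simp
next
  case (Suc t)
  let ?P = "perp_proj (Yt (Suc t))"
  have "fst (align Y Yt w N (Suc t)) = ?P (fst (align Y Yt w N t) + w (Suc t) *\<^sub>R Y (Suc t))"
    by (simp add: align_Suc_first_sweep[OF Suc.prems])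
  also have "\<dots> = (\<Sum>j=1..t. w j *\<^sub>R ?P (proj_chain Yt j t (Y j))) + w (Suc t) *\<^sub>R ?P (Y (Suc t))"
    using Suc by (simp add: linear_add[OF linear_perp_proj] linear_sum[OF linear_perp_proj]
        linear_scale[OF linear_perp_proj])
  also have "\<dots> = (\<Sum>j=1..Suc t. w j *\<^sub>R proj_chain Yt j (Suc t) (Y j))"
    by (simp add: proj_chain_Suc proj_chain_empty)
  finally show ?case .
qed

lemma snd_align_first_sweep: "t \<le> N \<Longrightarrow> t < j \<Longrightarrow> snd (align Y Yt w N t) j = 0"
  by (induction t) (auto simp: align_Suc_first_sweep)

lemma align_balance:
  assumes "1 \<le> N"
  shows "fst (align Y Yt w N t) =
    (\<Sum>j=1..min t N. w j *\<^sub>R Y j) - (\<Sum>j=1..N. snd (align Y Yt w N t) j *\<^sub>R Yt j)"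
proof (induction t)
  case 0
  then show ?case by simp
next
  case (Suc t)
  show ?case
  proof (cases "Suc t \<le> N")
    case True
    define v where "v = fst (align Y Yt w N t) + w (Suc t) *\<^sub>R Y (Suc t)"
    define a where "a = (Yt (Suc t) \<bullet> v) / (norm (Yt (Suc t)))\<^sup>2"
    have "fst (align Y Yt w N (Suc t)) = v - a *\<^sub>R Yt (Suc t)"
      by (simp add: align_Suc_first_sweep[OF True] perp_proj_def v_def a_def)
    moreover have "snd (align Y Yt w N (Suc t)) = (snd (align Y Yt w N t))(Suc t := a)"
      by (simp add: align_Suc_first_sweep[OF True] v_def a_def)
    then have "(\<Sum>j=1..N. snd (align Y Yt w N (Suc t)) j *\<^sub>R Yt j) =
        (\<Sum>j=1..N. snd (align Y Yt w N t) j *\<^sub>R Yt j) + a *\<^sub>R Yt (Suc t)"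
      using True snd_align_first_sweep[of t N "Suc t" Y Yt w]
        sum_fun_upd_scaleR[of "{1..N}" "Suc t" "snd (align Y Yt w N t)" a Yt]
      by (simp del: fun_upd_apply)
    ultimately show ?thesis
      using True Suc.IH by (simp add: v_def algebra_simps)
  next
    case False
    define j where "j = cidx N (Suc t)"
    define u where "u = fst (align Y Yt w N t)"
    define b where "b = snd (align Y Yt w N t) j"
    define a where "a = (Yt j \<bullet> (u + b *\<^sub>R Yt j)) / (norm (Yt j))\<^sup>2"
    note step = align_Suc_later_sweep[of N t j u Y Yt w b a]
    have "j \<in> {1..N}"
      using cidx_in_range[OF assms] j_def by simp
    then have "(\<Sum>i=1..N. snd (align Y Yt w N (Suc t)) i *\<^sub>R Yt i) =
        (\<Sum>i=1..N. snd (align Y Yt w N t) i *\<^sub>R Yt i) + (a - b) *\<^sub>R Yt j"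
      using False step sum_fun_upd_scaleR[of "{1..N}" j "snd (align Y Yt w N t)" a Yt]
      by (simp add: j_def u_def b_def a_def del: fun_upd_apply)
    moreover have "min (Suc t) N = min t N"
      using False by simp
    ultimately show ?thesis
      using False step Suc.IH by (simp add: j_def u_def b_def a_def algebra_simps)
  qed
qed

context
  fixes Y Yt :: "nat \<Rightarrow> real^'m" and w :: "nat \<Rightarrow> real" and N :: nat
  assumes nonzero: "\<forall>j\<in>{1..N}. Yt j \<noteq> 0"
begin

lemma fst_align_sweep:
  "i \<le> N \<Longrightarrow> fst (align Y Yt w N (Suc k * N + i)) =
     proj_chain Yt 1 i (fst (align Y Yt w N (Suc k * N)))"
proof (induction i)
  case 0
  then show ?case by (simp add: proj_chain_empty)
next
  case (Suc i)
  have "cidx N (Suc (Suc k * N + i)) = Suc i"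
    using cidx_mult_add[of "Suc i" N "Suc k"] Suc.prems by simp
  then show ?case
    using Suc fst_align_Suc_later_sweep[of N "Suc k * N + i" Yt Y w] nonzero
    by (simp add: proj_chain_Suc)
qed

lemma fst_align_mult:
  "fst (align Y Yt w N (Suc k * N)) = (proj_chain Yt 1 N ^^ k) (fst (align Y Yt w N N))"
proof (induction k)
  case 0
  then show ?case by simp
next
  case (Suc k)
  have "Suc (Suc k) * N = Suc k * N + N" by simp
  then have "fst (align Y Yt w N (Suc (Suc k) * N)) =
      proj_chain Yt 1 N (fst (align Y Yt w N (Suc k * N)))"
    using fst_align_sweep[of N k] by (simp only:)
  then show ?case
    using Suc.IH by simp
qed

end

theorem mainTheorem3:
  fixes Y Yt :: "nat \<Rightarrow> real^'m" and w :: "nat \<Rightarrow> real" and N r :: nat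
  assumes "N \<ge> 1" and "r \<ge> 1"
    and "\<forall>j\<in>{1..N}. Yt j \<noteq> 0"
  shows "fst (align Y Yt w N N) = (\<Sum>j=1..N. w j *\<^sub>R proj_chain Yt j N (Y j))
       \<and> fst (align Y Yt w N (r * N)) = ((proj_chain Yt 1 N) ^^ (r - 1)) (fst (align Y Yt w N N))
       \<and> fst (align Y Yt w N (r * N)) =
           (\<Sum>j=1..N. w j *\<^sub>R Y j) - (\<Sum>j=1..N. snd (align Y Yt w N (r * N)) j *\<^sub>R Yt j)"
proof (intro conjI)
  show "fst (align Y Yt w N N) = (\<Sum>j=1..N. w j *\<^sub>R proj_chain Yt j N (Y j))"
    by (simp add: fst_align_first_sweep)
  have "r * N = Suc (r - 1) * N"
    using assms(2) by simp
  then show "fst (align Y Yt w N (r * N)) = ((proj_chain Yt 1 N) ^^ (r - 1)) (fst (align Y Yt w N N))"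
    using fst_align_mult[OF assms(3)] by simp
  have "min (r * N) N = N"
    using assms(2) by simp
  then show "fst (align Y Yt w N (r * N)) =
      (\<Sum>j=1..N. w j *\<^sub>R Y j) - (\<Sum>j=1..N. snd (align Y Yt w N (r * N)) j *\<^sub>R Yt j)"
    using align_balance[OF assms(1), of Y Yt w "r * N"] by simp
qed

end
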